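(* Assume in addition that $l$ is $\mu$-strongly convex on $\mathcal{X}$ for some $\mu>0$. Consider SPDHG (as in the context) run with step-sizes $\beta^{k+1} = \frac{2}{\mu(k+2)+2L}$ and non-uniform weights $\alpha^{k+1}=\frac{2(k+1)}{(t+1)(t+2)}$, $k=0,\dots,t$. Let $(y^*,x^* )$ be any saddle point of $\min_{x\in\mathcal{X}}\max_{y\in\mathcal{Y}}P(y,x)$. Then for every $t\ge0$, $$0\le\mathbb{E}\left[P(y^*,\bar{x}^t) - P(\bar{y}^t,x^* )\right] \le \frac{D_y^2}{s(t+2)} + \frac{L D_x^2}{t+2} + \frac{4\lambda_{\max}(F^\top F)D_y^2+4\sigma^2}{\mu(t+2)},$$ i.e. convergence at rate $O(1/t)$ in expectation.
   Context: Setting: $\mathcal{X}\subset\mathbb{R}^d$ is a nonempty convex compact set with diameter $D_x$ (so $\|x-x'\|\le D_x$ for all $x,x'\in\mathcal{X}$), $\mathcal{Y}\subset\mathbb{R}^l$ is a nonempty convex compact set with diameter $D_y$, $F\in\mathbb{R}^{l\times d}$, and $\lambda_{\max}(F^\top F)$ denotes the largest eigenvalue of $F^\top F$. The loss is $l(x)=\mathbb{E}_\xi[l(x,\xi)]$, a convex, continuously differentiable function on $\mathcal{X}$ with $L$-Lipschitz gradient: $\|\nabla l(x_1)-\nabla l(x_2)\|\le L\|x_1-x_2\|$ for all $x_1,x_2\in\mathcal{X}$. $\mu$-strong convexity means $l(y)-l(x)-(y-x)^\top\nabla l(x)\ge\frac{\mu}{2}\|y-x\|^2$ for all $x,y\in\mathcal{X}$.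 The stochastic gradient $\nabla l(x,\xi)$ satisfies, for every $x\in\mathcal{X}$: $\mathbb{E}[\nabla l(x,\xi)]=\nabla l(x)$, $\mathbb{E}\|\nabla l(x,\xi)-\nabla l(x)\|^2\le\sigma^2$, and $\mathbb{E}\exp\left(\|\nabla l(x,\xi)-\nabla l(x)\|^2/\sigma^2\right)\le \exp(1)$, for a constant $\sigma>0$. The saddle function is $P(y,x)=l(x)+\langle y,Fx\rangle$ for $x\in\mathcal{X},y\in\mathcal{Y}$; a saddle point $(y^*,x^* )$ satisfies $P(y,x^* )\le P(y^*,x^* )\le P(y^*,x)$ for all $(y,x)\in\mathcal{Y}\times\mathcal{X}$ (assumed to exist). SPDHG: fix $s>0$, $x^0\in\mathcal{X}$, $y^0\in\mathcal{Y}$, and a sequence of step-sizes $\beta^{k+1}>0$. For $k=0,1,2,\dots$, draw a sample $\xi^{k+1}$ independently of the past (i.i.d. samples), and set $$y^{k+1}=\arg\max_{y\in\mathcal{Y}}\Big\{P(y,x^k)-\tfrac{1}{2s}\|y-y^k\|^2\Big\},\qquad x^{k+1}=\Pi_{\mathcal{X}}\Big[x^k-\beta^{k+1}\big(\nabla l(x^k,\xi^{k+1})+F^\top y^{k+1}\big)\Big],$$ where $\Pi_{\mathcal{X}}$ is Euclidean projection onto $\mathcal{X}$. Given weights $\alpha^{k+1}\ge0$ with $\sum_{k=0}^t\alpha^{k+1}=1$, the output after $t$ steps is $\bar x^t=\sum_{k=0}^t\alpha^{k+1}x^{k+1}$, $\bar y^t=\sum_{k=0}^t\alpha^{k+1}y^{k+1}$.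 *)

theory Defs
  imports "HOL-Analysis.Analysis" "HOL-Probability.Probability"
begin

definition Psad :: "(real^'d \<Rightarrow> real) \<Rightarrow> real^'d^'l \<Rightarrow> real^'l \<Rightarrow> real^'d \<Rightarrow> real" where
  "Psad l F y x = l x + y \<bullet> (F *v x)"

definition lambda_max :: "real^'n^'n \<Rightarrow> real" where
  "lambda_max A = Max {lam. \<exists>v. v \<noteq> 0 \<and> A *v v = lam *\<^sub>R v}"

text \<open>SPDHG iterates (y^k, x^k) driven by a sample sequence w; the sample used in step k
  (the paper's xi^{k+1}) is w k. beta j is the paper's beta^j.\<close>
fun spdhg :: "(real^'d \<Rightarrow> real) \<Rightarrow> (real^'d \<Rightarrow> 'e \<Rightarrow> real^'d) \<Rightarrow> real^'d^'l
   \<Rightarrow> (real^'d) set \<Rightarrow> (real^'l) set \<Rightarrow> real \<Rightarrow> (nat \<Rightarrow> real) \<Rightarrow> real^'l \<Rightarrow> real^'d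
   \<Rightarrow> (nat \<Rightarrow> 'e) \<Rightarrow> nat \<Rightarrow> (real^'l) \<times> (real^'d)" where
  "spdhg l G F X Y s beta y0 x0 w 0 = (y0, x0)"
| "spdhg l G F X Y s beta y0 x0 w (Suc k) =
     (let (y, x) = spdhg l G F X Y s beta y0 x0 w k;
          y' = arg_max (\<lambda>v. Psad l F v x - (1 / (2 * s)) * (norm (v - y))\<^sup>2) (\<lambda>v. v \<in> Y);
          x' = closest_point X (x - beta (Suc k) *\<^sub>R (G x (w k) + transpose F *v y'))
      in (y', x'))"

definition xbar where
  "xbar l G F X Y s beta y0 x0 alpha w t =
     (\<Sum>k\<le>t. alpha (Suc k) *\<^sub>R snd (spdhg l G F X Y s beta y0 x0 w (Suc k)))"

definition ybar where
  "ybar l G F X Y s beta y0 x0 alpha w t =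
     (\<Sum>k\<le>t. alpha (Suc k) *\<^sub>R fst (spdhg l G F X Y s beta y0 x0 w (Suc k)))"

end

theory Submission
  imports Defs
begin

text \<open>The three-point inequality for projections,
  together with smoothness and strong convexity of \<open>l\<close>, bounds the gap
  P(y*, x_{k+1}) - P(y_{k+1}, x*) by differences of squared distances to the saddle point, plus
  the noise paired with x* - x_k and a cross term which the proximal term absorbs at the price
  (2 lambda_max D_y^2 + 2 |noise|^2) / (mu (k + 2)). With beta_{k+1} = 2 / (mu (k + 2) + 2 L) and
  weights proportional to k + 1 the distance terms telescope, and convexity of \<open>l\<close> transfers the
  bound to the averages. Since x_k depends only on the first k samples, independence makes the
  expected pairing vanish and bounds the expected squared noise by sigma^2.\<close>

section \<open>Smooth functions and projections\<close>

lemma lipschitz_gradient_upper_bound: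
  fixes l :: "'a::real_inner \<Rightarrow> real" and gl :: "'a \<Rightarrow> 'a"
  assumes "convex X" and x: "x \<in> X" and y: "y \<in> X"
    and deriv: "\<And>z. z \<in> X \<Longrightarrow> (l has_derivative (\<lambda>h. gl z \<bullet> h)) (at z within X)"
    and lip: "\<And>x1 x2. x1 \<in> X \<Longrightarrow> x2 \<in> X \<Longrightarrow> norm (gl x1 - gl x2) \<le> L * norm (x1 - x2)"
  shows "l y \<le> l x + gl x \<bullet> (y - x) + L / 2 * (norm (y - x))\<^sup>2"
proof -
  define d where "d = y - x"
  define \<phi> where "\<phi> \<tau> = l (x + \<tau> *\<^sub>R d) - \<tau> * (gl x \<bullet> d) - L / 2 * \<tau>\<^sup>2 * (norm d)\<^sup>2" for \<tau> :: real
  have seg: "x + \<tau> *\<^sub>R d \<in> X" if "\<tau> \<in> {0..1}" for \<tau>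
    using convexD_alt[OF \<open>convex X\<close> x y, of \<tau>] that by (simp add: d_def algebra_simps)
  have dphi: "(\<phi> has_real_derivative (gl (x + \<tau> *\<^sub>R d) - gl x) \<bullet> d - L * \<tau> * (norm d)\<^sup>2)
      (at \<tau> within {0..1})" if "\<tau> \<in> {0..1}" for \<tau>
  proof -
    have "((\<lambda>\<tau>. x + \<tau> *\<^sub>R d) has_derivative (\<lambda>h. h *\<^sub>R d)) (at \<tau> within {0..1})"
      by (auto intro!: derivative_eq_intros)
    moreover have "(\<lambda>\<tau>. x + \<tau> *\<^sub>R d) ` {0..1} \<subseteq> X" using seg by auto
    ultimately have "((\<lambda>\<tau>. l (x + \<tau> *\<^sub>R d)) has_derivative (\<lambda>h. gl (x + \<tau> *\<^sub>R d) \<bullet> (h *\<^sub>R d))) (at \<tau> within {0..1})"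
      using has_derivative_in_compose2[OF deriv _ that] by blast
    then have "((\<lambda>\<tau>. l (x + \<tau> *\<^sub>R d)) has_real_derivative gl (x + \<tau> *\<^sub>R d) \<bullet> d) (at \<tau> within {0..1})"
      unfolding has_field_derivative_def by (simp add: mult_commute_abs)
    then show ?thesis
      unfolding \<phi>_def by (auto intro!: derivative_eq_intros simp: inner_diff_left power2_eq_square)
  qed
  have "\<phi> 1 \<le> \<phi> 0"
  proof (rule DERIV_nonpos_imp_decreasing_open[of 0 1 \<phi>])
    show "continuous_on {0..1} \<phi>"
      using dphi DERIV_continuous continuous_on_eq_continuous_within by blast
    fix \<tau> :: real assume "0 < \<tau>" "\<tau> < 1"
    have "(gl (x + \<tau> *\<^sub>R d) - gl x) \<bullet> d \<le> norm (gl (x + \<tau> *\<^sub>R d) - gl x) * norm d"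
      by (rule norm_cauchy_schwarz)
    also have "\<dots> \<le> L * norm ((x + \<tau> *\<^sub>R d) - x) * norm d"
      using lip[OF seg x, of \<tau>] \<open>0 < \<tau>\<close> \<open>\<tau> < 1\<close> by (intro mult_right_mono) auto
    also have "\<dots> = L * \<tau> * (norm d)\<^sup>2"
      using \<open>0 < \<tau>\<close> by (simp add: power2_eq_square)
    finally show "\<exists>D. DERIV \<phi> \<tau> :> D \<and> D \<le> 0"
      using dphi[of \<tau>] \<open>0 < \<tau>\<close> \<open>\<tau> < 1\<close> at_within_Icc_at[of 0 \<tau> 1] by auto
  qed simp_all
  then show ?thesis by (simp add: \<phi>_def d_def)
qed

lemma arg_max_proximal_eq_closest_point:
  fixes Y :: "'a::euclidean_space set"
  assumes "Y \<noteq> {}" "convex Y" "closed Y" and "s > 0"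
  shows "arg_max (\<lambda>v. c + v \<bullet> a - 1 / (2 * s) * (norm (v - y))\<^sup>2) (\<lambda>v. v \<in> Y)
       = closest_point Y (y + s *\<^sub>R a)"
proof -
  define z where "z = y + s *\<^sub>R a"
  define f where "f = (\<lambda>v. c + v \<bullet> a - 1 / (2 * s) * (norm (v - y))\<^sup>2)"
  \<comment> \<open>completing the square\<close>
  have f_eq: "f v = c + y \<bullet> a + s / 2 * (norm a)\<^sup>2 - 1 / (2 * s) * (norm (v - z))\<^sup>2" for v
  proof -
    have sq: "(norm (v - z))\<^sup>2 = (norm (v - y))\<^sup>2 - 2 * s * ((v - y) \<bullet> a) + s\<^sup>2 * (norm a)\<^sup>2"
      unfolding z_def power2_norm_eq_inner
      by (simp add: inner_commute power2_eq_square algebra_simps)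
    have "1 / (2 * s) * (norm (v - z))\<^sup>2 = 1 / (2 * s) * (norm (v - y))\<^sup>2 - (v - y) \<bullet> a + s / 2 * (norm a)\<^sup>2"
      unfolding sq using \<open>s > 0\<close> by (simp add: field_simps power2_eq_square)
    then show ?thesis by (simp add: f_def inner_diff_left)
  qed
  have f_le_iff: "f u \<le> f v \<longleftrightarrow> dist z v \<le> dist z u" for u v
    using \<open>s > 0\<close> by (simp add: f_eq dist_norm norm_minus_commute divide_le_cancel)
  have arg_max_iff: "is_arg_max f (\<lambda>v. v \<in> Y) m \<longleftrightarrow> m = closest_point Y z" for m
    using closest_point_unique[OF assms(2,3), of m z] closest_point_in_set[OF assms(3,1)]
      closest_point_le[OF assms(3)]
    by (auto simp: is_arg_max_def f_le_iff not_less)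
  show ?thesis
    unfolding f_def[symmetric] z_def[symmetric] arg_max_def arg_max_iff by simp
qed

lemma closest_point_three_point:
  fixes S :: "'a::euclidean_space set"
  assumes "convex S" "closed S" "v \<in> S"
  shows "2 * ((z - y) \<bullet> (v - closest_point S z))
    \<le> (norm (v - y))\<^sup>2 - (norm (v - closest_point S z))\<^sup>2 - (norm (closest_point S z - y))\<^sup>2"
proof -
  let ?p = "closest_point S z"
  have "(z - ?p) \<bullet> (v - ?p) \<le> 0" by (rule closest_point_dot[OF assms])
  moreover have "(norm (v - y))\<^sup>2 = (norm (v - ?p))\<^sup>2 + 2 * ((v - ?p) \<bullet> (?p - y)) + (norm (?p - y))\<^sup>2"
    unfolding power2_norm_eq_inner by (simp add: inner_diff_left inner_diff_right inner_commute)
  ultimately show ?thesis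
    by (simp add: inner_commute algebra_simps)
qed

lemma young_quadratic_bound:
  fixes c n m :: real
  assumes "m > 0"
  shows "c * n - m * n\<^sup>2 \<le> c\<^sup>2 / (4 * m)"
proof -
  have "4 * m * (c * n - m * n\<^sup>2) \<le> c\<^sup>2"
    using zero_le_power2[of "c - 2 * m * n"] by (simp add: power2_eq_square algebra_simps)
  then show ?thesis using assms by (simp add: field_simps)
qed

lemma abs_inner_le_diameter:
  assumes "bounded S" "a \<in> S" "b \<in> S"
  shows "\<bar>d \<bullet> (a - b)\<bar> \<le> diameter S * (1 + (norm d)\<^sup>2)"
proof -
  have "\<bar>d \<bullet> (a - b)\<bar> \<le> norm d * norm (a - b)"
    by (rule Cauchy_Schwarz_ineq2)
  also have "\<dots> \<le> (1 + (norm d)\<^sup>2) * diameter S"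
  proof (rule mult_mono)
    have "2 * norm d \<le> 1 + (norm d)\<^sup>2"
      using zero_le_power2[of "norm d - 1"] by (simp add: power2_eq_square algebra_simps)
    then show "norm d \<le> 1 + (norm d)\<^sup>2" using norm_ge_zero[of d] by linarith
    show "norm (a - b) \<le> diameter S"
      using diameter_bounded_bound[OF assms] by (simp add: dist_norm)
  qed simp_all
  finally show ?thesis by (simp add: mult.commute)
qed

section \<open>The largest eigenvalue of a Gram matrix\<close>

lemma inner_matrix_vector_symmetric:
  fixes A :: "real^'n^'n"
  assumes "transpose A = A"
  shows "(A *v v) \<bullet> w = v \<bullet> (A *v w)"
  by (metis assms dot_lmul_matrix vector_transpose_matrix)

lemma finite_eigenvalues_symmetric:
  fixes A :: "real^'n^'n"
  assumes "transpose A = A"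
  shows "finite {lam. \<exists>v. v \<noteq> 0 \<and> A *v v = lam *\<^sub>R v}"
proof -
  define S where "S = {lam. \<exists>v. v \<noteq> 0 \<and> A *v v = lam *\<^sub>R v}"
  define ev where "ev lam = (SOME v. v \<noteq> 0 \<and> A *v v = lam *\<^sub>R v)" for lam
  have ev: "ev lam \<noteq> 0 \<and> A *v ev lam = lam *\<^sub>R ev lam" if "lam \<in> S" for lam
    using someI_ex[of "\<lambda>v. v \<noteq> 0 \<and> A *v v = lam *\<^sub>R v"] that unfolding S_def ev_def by blast
  have "inj_on ev S"
  proof (rule inj_onI)
    fix a b assume "a \<in> S" "b \<in> S" "ev a = ev b"
    then have "a *\<^sub>R ev a = b *\<^sub>R ev a" using ev by metis
    then show "a = b" using ev[OF \<open>a \<in> S\<close>] by simp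
  qed
  moreover have "pairwise orthogonal (ev ` S)"
  proof (clarsimp simp: pairwise_def)
    fix a b assume "a \<in> S" "b \<in> S" "ev a \<noteq> ev b"
    then have "a \<noteq> b" by auto
    have "a * (ev a \<bullet> ev b) = (A *v ev a) \<bullet> ev b" using ev[OF \<open>a \<in> S\<close>] by simp
    also have "\<dots> = ev a \<bullet> (A *v ev b)" by (rule inner_matrix_vector_symmetric[OF assms])
    also have "\<dots> = b * (ev a \<bullet> ev b)" using ev[OF \<open>b \<in> S\<close>] by simp
    finally show "orthogonal (ev a) (ev b)" using \<open>a \<noteq> b\<close> by (simp add: orthogonal_def)
  qed
  ultimately show ?thesis
    unfolding S_def[symmetric] using pairwise_orthogonal_imp_finite finite_imageD by blast
qed

lemma inner_Gram_matrix:
  fixes F :: "real^'d^'l"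
  shows "((transpose F ** F) *v v) \<bullet> w = (F *v v) \<bullet> (F *v w)"
  unfolding matrix_vector_mul_assoc[symmetric] transpose_matrix_vector dot_lmul_matrix ..

lemma eq_0_if_quadratic_nonpos:
  fixes W b :: real
  assumes "W \<ge> 0" and nonpos: "\<And>\<tau>. 2 * \<tau> * W + \<tau>\<^sup>2 * b \<le> 0"
  shows "W = 0"
proof (rule ccontr)
  assume "W \<noteq> 0"
  with \<open>W \<ge> 0\<close> have "W > 0" by simp
  define \<tau> where "\<tau> = W / (\<bar>b\<bar> + 1)"
  have "\<tau> > 0" "\<tau> * \<bar>b\<bar> \<le> W"
    using \<open>W > 0\<close> by (simp_all add: \<tau>_def field_simps)
  have "- (\<tau> * W) \<le> - (\<tau> * (\<tau> * \<bar>b\<bar>))"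
    using mult_left_mono[OF \<open>\<tau> * \<bar>b\<bar> \<le> W\<close>] \<open>\<tau> > 0\<close> by simp
  also have "\<dots> \<le> \<tau>\<^sup>2 * b"
    using \<open>\<tau> > 0\<close> by (cases "b < 0") (simp_all add: power2_eq_square)
  finally have "\<tau> * W \<le> 2 * \<tau> * W + \<tau>\<^sup>2 * b" by (simp add: mult.commute)
  moreover have "\<tau> * W > 0" using \<open>\<tau> > 0\<close> \<open>W > 0\<close> by simp
  ultimately show False using nonpos[of \<tau>] by linarith
qed

lemma norm_matrix_vector_sq_maximizer:
  fixes F :: "real^'d^'l"
  obtains e where "norm e = 1" "\<And>d. (norm (F *v d))\<^sup>2 \<le> (norm (F *v e))\<^sup>2 * (norm d)\<^sup>2"
proof -
  have "sphere (0::real^'d) 1 \<noteq> {}"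
    using vector_choose_size[of 1] by auto
  moreover have "continuous_on (sphere 0 1) (\<lambda>v. (norm (F *v v))\<^sup>2)"
    by (intro continuous_intros)
  ultimately obtain e where e: "e \<in> sphere 0 1"
    and max: "\<And>v. v \<in> sphere 0 1 \<Longrightarrow> (norm (F *v v))\<^sup>2 \<le> (norm (F *v e))\<^sup>2"
    using continuous_attains_sup[OF compact_sphere] by blast
  have "(norm (F *v d))\<^sup>2 \<le> (norm (F *v e))\<^sup>2 * (norm d)\<^sup>2" for d
  proof (cases "d = 0")
    case False
    then have "(norm (F *v ((1 / norm d) *\<^sub>R d)))\<^sup>2 \<le> (norm (F *v e))\<^sup>2"
      by (intro max) simp
    with False show ?thesis
      by (simp add: matrix_vector_mult_scaleR field_simps)
  qed simp
  with e show ?thesis by (intro that) auto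
qed

text \<open>First variation of the Rayleigh quotient at a maximizer.\<close>
lemma Gram_eigenvector_of_maximizer:
  fixes F :: "real^'d^'l"
  assumes e: "norm e = 1" and max: "\<And>d. (norm (F *v d))\<^sup>2 \<le> c * (norm d)\<^sup>2"
    and c: "c = (norm (F *v e))\<^sup>2"
  shows "(transpose F ** F) *v e = c *\<^sub>R e"
proof -
  define w where "w = (transpose F ** F) *v e - c *\<^sub>R e"
  have "2 * \<tau> * (norm w)\<^sup>2 + \<tau>\<^sup>2 * ((norm (F *v w))\<^sup>2 - c * (norm w)\<^sup>2) \<le> 0" for \<tau>
  proof -
    have "(norm (F *v (e + \<tau> *\<^sub>R w)))\<^sup>2 = c + 2 * \<tau> * (((transpose F ** F) *v e) \<bullet> w) + \<tau>\<^sup>2 * (norm (F *v w))\<^sup>2"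
      unfolding power2_norm_eq_inner c inner_Gram_matrix
      by (simp add: inner_commute power2_eq_square algebra_simps)
    moreover have "(norm (e + \<tau> *\<^sub>R w))\<^sup>2 = 1 + 2 * \<tau> * (e \<bullet> w) + \<tau>\<^sup>2 * (norm w)\<^sup>2"
      using e[unfolded norm_eq_1] unfolding power2_norm_eq_inner
      by (simp add: inner_commute power2_eq_square algebra_simps)
    moreover have "((transpose F ** F) *v e) \<bullet> w - c * (e \<bullet> w) = (norm w)\<^sup>2"
      by (simp add: w_def power2_norm_eq_inner inner_diff_left)
    ultimately show ?thesis
      using max[of "e + \<tau> *\<^sub>R w"] by (simp add: algebra_simps)
  qed
  then have "(norm w)\<^sup>2 = 0" by (intro eq_0_if_quadratic_nonpos) auto
  then show ?thesis unfolding w_def by simp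
qed

lemma lambda_max_Gram:
  fixes F :: "real^'d^'l"
  shows "0 \<le> lambda_max (transpose F ** F)"
    and "(norm (F *v d))\<^sup>2 \<le> lambda_max (transpose F ** F) * (norm d)\<^sup>2"
proof -
  obtain e where e: "norm e = 1" and max: "\<And>d. (norm (F *v d))\<^sup>2 \<le> (norm (F *v e))\<^sup>2 * (norm d)\<^sup>2"
    using norm_matrix_vector_sq_maximizer[of F] by blast
  define c where "c = (norm (F *v e))\<^sup>2"
  have le_c: "lam \<le> c" if "v \<noteq> 0" "(transpose F ** F) *v v = lam *\<^sub>R v" for lam v
  proof -
    have "lam * (norm v)\<^sup>2 = (norm (F *v v))\<^sup>2"
      using inner_Gram_matrix[of F v v] that by (simp add: power2_norm_eq_inner)
    also have "\<dots> \<le> c * (norm v)\<^sup>2" using max c_def by simp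
    finally show ?thesis using that by simp
  qed
  have "lambda_max (transpose F ** F) = c"
    unfolding lambda_max_def
  proof (rule Max_eqI)
    show "finite {lam. \<exists>v. v \<noteq> 0 \<and> (transpose F ** F) *v v = lam *\<^sub>R v}"
      by (rule finite_eigenvalues_symmetric) (simp add: matrix_transpose_mul)
    show "c \<in> {lam. \<exists>v. v \<noteq> 0 \<and> (transpose F ** F) *v v = lam *\<^sub>R v}"
      using Gram_eigenvector_of_maximizer[OF e _ c_def] max e c_def by (auto intro!: exI[of _ e])
  qed (use le_c in blast)
  then show "0 \<le> lambda_max (transpose F ** F)" "(norm (F *v d))\<^sup>2 \<le> lambda_max (transpose F ** F) * (norm d)\<^sup>2"
    using max[of d] by (simp_all add: c_def)
qed

section \<open>One step of SPDHG\<close>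

lemma Psad_gap_convex_combination:
  fixes F :: "real^'d^'l"
  assumes "convex_on X l" "finite I" "sum a I = 1" "\<And>i. i \<in> I \<Longrightarrow> 0 \<le> a i" "\<And>i. i \<in> I \<Longrightarrow> x i \<in> X"
  shows "Psad l F v (\<Sum>i\<in>I. a i *\<^sub>R x i) - Psad l F (\<Sum>i\<in>I. a i *\<^sub>R y i) u
    \<le> (\<Sum>i\<in>I. a i * (Psad l F v (x i) - Psad l F (y i) u))"
proof -
  have "I \<noteq> {}" using \<open>sum a I = 1\<close> by auto
  then have "l (\<Sum>i\<in>I. a i *\<^sub>R x i) \<le> (\<Sum>i\<in>I. a i * l (x i))"
    using convex_on_sum[OF \<open>finite I\<close> _ assms(1,3)] assms(4,5) by blast
  moreover have "l u = (\<Sum>i\<in>I. a i * l u)"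
    using \<open>sum a I = 1\<close> by (simp add: sum_distrib_right[symmetric])
  moreover have "(\<Sum>i\<in>I. a i * (Psad l F v (x i) - Psad l F (y i) u))
      = (\<Sum>i\<in>I. a i * l (x i)) + (\<Sum>i\<in>I. a i * (v \<bullet> (F *v x i)))
        - (\<Sum>i\<in>I. a i * l u) - (\<Sum>i\<in>I. a i * (y i \<bullet> (F *v u)))"
    by (simp add: Psad_def right_diff_distrib distrib_left sum.distrib sum_subtractf)
  ultimately show ?thesis
    unfolding Psad_def vec.sum by (simp add: inner_sum_left inner_sum_right matrix_vector_mult_scaleR)
qed

lemma spdhg_step_basic:
  fixes F :: "real^'d^'l" and l :: "real^'d \<Rightarrow> real"
  assumes X: "convex X" "closed X" and Y: "convex Y" "closed Y"
    and strong: "\<And>x y. x \<in> X \<Longrightarrow> y \<in> X \<Longrightarrow> l y - l x - (y - x) \<bullet> gl x \<ge> \<mu> / 2 * (norm (y - x))\<^sup>2"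
    and smooth: "\<And>x y. x \<in> X \<Longrightarrow> y \<in> X \<Longrightarrow> l y \<le> l x + gl x \<bullet> (y - x) + L / 2 * (norm (y - x))\<^sup>2"
    and "s > 0" "\<beta> > 0" and u: "u \<in> X" and v: "v \<in> Y" and x: "x \<in> X"
    and yp: "yp = closest_point Y (y + s *\<^sub>R (F *v x))"
    and xp: "xp = closest_point X (x - \<beta> *\<^sub>R (g + transpose F *v yp))"
  shows "Psad l F v xp - Psad l F yp u
    \<le> 1 / (2 * \<beta>) * ((norm (u - x))\<^sup>2 - (norm (u - xp))\<^sup>2 - (norm (xp - x))\<^sup>2)
      + L / 2 * (norm (xp - x))\<^sup>2 - \<mu> / 2 * (norm (u - x))\<^sup>2
      + 1 / (2 * s) * ((norm (v - y))\<^sup>2 - (norm (v - yp))\<^sup>2)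
      + (v - yp) \<bullet> (F *v (xp - x)) - (g - gl x) \<bullet> (xp - x) + (g - gl x) \<bullet> (u - x)"
proof -
  have xpX: "xp \<in> X" using xp closest_point_in_set[OF X(2)] x by auto
  define q where "q = g + transpose F *v yp"
  have xp_q: "xp = closest_point X (x - \<beta> *\<^sub>R q)" using xp q_def by simp
  have dual: "(v - yp) \<bullet> (F *v x) \<le> 1 / (2 * s) * ((norm (v - y))\<^sup>2 - (norm (v - yp))\<^sup>2)"
    using closest_point_three_point[OF Y v, of "y + s *\<^sub>R (F *v x)" y] \<open>s > 0\<close>
    unfolding yp[symmetric] by (simp add: inner_commute field_simps) (use zero_le_power2[of "norm (yp - y)"] in linarith)
  have primal: "q \<bullet> (xp - u) \<le> 1 / (2 * \<beta>) * ((norm (u - x))\<^sup>2 - (norm (u - xp))\<^sup>2 - (norm (xp - x))\<^sup>2)"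
    using closest_point_three_point[OF X u, of "x - \<beta> *\<^sub>R q" x] \<open>\<beta> > 0\<close>
    unfolding xp_q[symmetric] by (simp add: inner_diff_right field_simps)
  have "l xp - l u \<le> gl x \<bullet> (xp - u) + L / 2 * (norm (xp - x))\<^sup>2 - \<mu> / 2 * (norm (u - x))\<^sup>2"
    using smooth[OF x xpX] strong[OF x u] by (simp add: inner_diff_right inner_commute)
  moreover have "gl x \<bullet> (xp - u) = q \<bullet> (xp - u) - (g - gl x) \<bullet> (xp - x) + (g - gl x) \<bullet> (u - x)
      - yp \<bullet> (F *v xp) + yp \<bullet> (F *v u)"
    by (simp add: q_def dot_lmul_matrix algebra_simps)
  moreover have "v \<bullet> (F *v xp) - yp \<bullet> (F *v xp) = (v - yp) \<bullet> (F *v x) + (v - yp) \<bullet> (F *v (xp - x))"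
    by (simp add: matrix_vector_mult_diff_distrib inner_diff_left inner_diff_right)
  ultimately show ?thesis
    using dual primal unfolding Psad_def by linarith
qed

lemma spdhg_step_inequality:
  fixes F :: "real^'d^'l" and l :: "real^'d \<Rightarrow> real"
  assumes X: "convex X" "closed X" and Y: "convex Y" "closed Y" "bounded Y"
    and strong: "\<And>x y. x \<in> X \<Longrightarrow> y \<in> X \<Longrightarrow> l y - l x - (y - x) \<bullet> gl x \<ge> \<mu> / 2 * (norm (y - x))\<^sup>2"
    and smooth: "\<And>x y. x \<in> X \<Longrightarrow> y \<in> X \<Longrightarrow> l y \<le> l x + gl x \<bullet> (y - x) + L / 2 * (norm (y - x))\<^sup>2"
    and "s > 0" "\<mu> > 0" "\<kappa> \<ge> 0" "L \<ge> 0"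
    and lam: "lam \<ge> 0" "\<And>d. (norm (F *v d))\<^sup>2 \<le> lam * (norm d)\<^sup>2"
    and u: "u \<in> X" and v: "v \<in> Y" and x: "x \<in> X"
    and yp: "yp = closest_point Y (y + s *\<^sub>R (F *v x))"
    and xp: "xp = closest_point X (x - \<beta> *\<^sub>R (g + transpose F *v yp))"
    and \<beta>: "\<beta> = 2 / (\<mu> * (\<kappa> + 2) + 2 * L)"
  shows "Psad l F v xp - Psad l F yp u
    \<le> (\<mu> * \<kappa> + 2 * L) / 4 * (norm (u - x))\<^sup>2 - (\<mu> * (\<kappa> + 2) + 2 * L) / 4 * (norm (u - xp))\<^sup>2
      + 1 / (2 * s) * ((norm (v - y))\<^sup>2 - (norm (v - yp))\<^sup>2)
      + (2 * lam * (diameter Y)\<^sup>2 + 2 * (norm (g - gl x))\<^sup>2) / (\<mu> * (\<kappa> + 2))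
      + (g - gl x) \<bullet> (u - x)"
proof -
  define m where "m = \<mu> * (\<kappa> + 2) / 4"
  define n where "n = norm (xp - x)"
  define c where "c = diameter Y * sqrt lam + norm (g - gl x)"
  have "m > 0" using \<open>\<mu> > 0\<close> \<open>\<kappa> \<ge> 0\<close> by (simp add: m_def)
  have "\<beta> > 0" and inv_\<beta>: "1 / (2 * \<beta>) = m + L / 2"
    using \<open>\<mu> > 0\<close> \<open>\<kappa> \<ge> 0\<close> \<open>L \<ge> 0\<close> by (simp_all add: \<beta> m_def add_pos_nonneg)
  have ypY: "yp \<in> Y" using yp closest_point_in_set[OF Y(2)] v by auto
  have "norm (F *v (xp - x)) \<le> sqrt lam * n"
    using real_sqrt_le_mono[OF lam(2)[of "xp - x"]] by (simp add: n_def real_sqrt_mult)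
  moreover have "norm (v - yp) \<le> diameter Y"
    using diameter_bounded_bound[OF Y(3) v ypY] by (simp add: dist_norm)
  ultimately have "norm (v - yp) * norm (F *v (xp - x)) \<le> diameter Y * (sqrt lam * n)"
    by (intro mult_mono) (auto intro: order_trans[OF norm_ge_zero])
  then have "(v - yp) \<bullet> (F *v (xp - x)) \<le> diameter Y * (sqrt lam * n)"
    using norm_cauchy_schwarz[of "v - yp" "F *v (xp - x)"] by linarith
  moreover have "- ((g - gl x) \<bullet> (xp - x)) \<le> norm (g - gl x) * n"
    using norm_cauchy_schwarz[of "gl x - g" "xp - x"] by (simp add: n_def inner_diff_left norm_minus_commute)
  ultimately have cross: "(v - yp) \<bullet> (F *v (xp - x)) - (g - gl x) \<bullet> (xp - x) \<le> c * n"
    by (simp add: c_def algebra_simps)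
  \<comment> \<open>the part \<open>m * n\<^sup>2\<close> of the proximal term absorbs the cross terms\<close>
  have "c * n - m * n\<^sup>2 \<le> c\<^sup>2 / (4 * m)" by (rule young_quadratic_bound[OF \<open>m > 0\<close>])
  also have "\<dots> \<le> (2 * lam * (diameter Y)\<^sup>2 + 2 * (norm (g - gl x))\<^sup>2) / (\<mu> * (\<kappa> + 2))"
  proof -
    have "c\<^sup>2 \<le> 2 * (diameter Y * sqrt lam)\<^sup>2 + 2 * (norm (g - gl x))\<^sup>2"
      unfolding c_def using zero_le_power2[of "diameter Y * sqrt lam - norm (g - gl x)"]
      by (simp add: power2_eq_square algebra_simps)
    then show ?thesis
      using \<open>m > 0\<close> lam(1) by (simp add: m_def power_mult_distrib mult.commute divide_right_mono)
  qed
  moreover have "(m + L / 2) * ((norm (u - x))\<^sup>2 - (norm (u - xp))\<^sup>2 - n\<^sup>2) + L / 2 * n\<^sup>2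
      - \<mu> / 2 * (norm (u - x))\<^sup>2
      = (\<mu> * \<kappa> + 2 * L) / 4 * (norm (u - x))\<^sup>2 - (\<mu> * (\<kappa> + 2) + 2 * L) / 4 * (norm (u - xp))\<^sup>2
        - m * n\<^sup>2"
    by (simp add: m_def field_simps)
  ultimately show ?thesis
    using spdhg_step_basic[OF X Y(1,2) strong smooth \<open>s > 0\<close> \<open>\<beta> > 0\<close> u v x yp xp] cross
    unfolding inv_\<beta> n_def[symmetric] by linarith
qed

section \<open>Weighted telescoping\<close>

lemma sum_averaging_weights:
  "(\<Sum>k\<le>t. 2 * real (Suc k) / ((real t + 1) * (real t + 2))) = 1"
proof -
  have "(\<Sum>k\<le>t. 2 * real (Suc k) / ((real t + 1) * (real t + 2)))
      = 2 * (\<Sum>k\<le>t. real (Suc k)) / ((real t + 1) * (real t + 2))"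
    by (simp add: sum_divide_distrib sum_distrib_left)
  also have "(\<Sum>k\<le>t. real (Suc k)) = (real t + 1) * (real t + 2) / 2"
    by (induction t) (simp_all add: field_simps)
  finally show ?thesis by simp
qed

lemma sum_weighted_telescope:
  fixes B :: "nat \<Rightarrow> real"
  shows "(\<Sum>k\<le>t. (real k + 1) * (B k - B (Suc k))) = (\<Sum>k\<le>t. B k) - (real t + 1) * B (Suc t)"
  by (induction t) (simp_all add: field_simps)

lemma sum_weighted_telescope_strongly_convex:
  fixes A :: "nat \<Rightarrow> real"
  shows "(\<Sum>k\<le>t. (real k + 1) * ((\<mu> * real k + 2 * L) / 4 * A k - (\<mu> * (real k + 2) + 2 * L) / 4 * A (Suc k)))
    = L / 2 * (\<Sum>k\<le>t. A k) - (real t + 1) * ((\<mu> * (real t + 2) + 2 * L) / 4) * A (Suc t)"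
  by (induction t) (simp_all add: field_simps)

text \<open>With the weights \<open>k + 1\<close> the step-size schedule telescopes: the coefficient of
  \<open>A (Suc k)\<close> regained in step \<open>k + 1\<close> exceeds the one lost in step \<open>k\<close> only by \<open>L / 2\<close>.\<close>
lemma weighted_telescoping_bound:
  fixes A B \<Phi> R :: "nat \<Rightarrow> real" and t :: nat
  assumes "L \<ge> 0" "\<mu> \<ge> 0" "s > 0"
    and A: "\<And>k. 0 \<le> A k" "\<And>k. A k \<le> a" and B: "\<And>k. 0 \<le> B k" "\<And>k. B k \<le> b"
    and step: "\<And>k. \<Phi> k \<le> (\<mu> * real k + 2 * L) / 4 * A k - (\<mu> * (real k + 2) + 2 * L) / 4 * A (Suc k)
                     + 1 / (2 * s) * (B k - B (Suc k)) + R k"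
  defines "w \<equiv> \<lambda>k. 2 * real (Suc k) / ((real t + 1) * (real t + 2))"
  shows "(\<Sum>k\<le>t. w k * \<Phi> k) \<le> b / (s * (real t + 2)) + L * a / (real t + 2) + (\<Sum>k\<le>t. w k * R k)"
proof -
  define c where "c = 2 / ((real t + 1) * (real t + 2))"
  have "c > 0" and w: "w k = c * (real k + 1)" for k
    by (simp_all add: c_def w_def)
  have "(\<Sum>k\<le>t. w k * \<Phi> k) \<le> (\<Sum>k\<le>t. w k * ((\<mu> * real k + 2 * L) / 4 * A k
      - (\<mu> * (real k + 2) + 2 * L) / 4 * A (Suc k) + 1 / (2 * s) * (B k - B (Suc k)) + R k))"
    using step \<open>c > 0\<close> by (intro sum_mono mult_left_mono) (auto simp: w)
  also have "\<dots> = c * (\<Sum>k\<le>t. (real k + 1) * ((\<mu> * real k + 2 * L) / 4 * A k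
        - (\<mu> * (real k + 2) + 2 * L) / 4 * A (Suc k)))
      + c / (2 * s) * (\<Sum>k\<le>t. (real k + 1) * (B k - B (Suc k))) + (\<Sum>k\<le>t. w k * R k)"
    unfolding sum_distrib_left sum.distrib[symmetric]
    by (intro sum.cong refl) (simp add: w field_simps)
  also have "\<dots> = c * (L / 2 * (\<Sum>k\<le>t. A k) - (real t + 1) * ((\<mu> * (real t + 2) + 2 * L) / 4) * A (Suc t))
      + c / (2 * s) * ((\<Sum>k\<le>t. B k) - (real t + 1) * B (Suc t)) + (\<Sum>k\<le>t. w k * R k)"
    unfolding sum_weighted_telescope_strongly_convex sum_weighted_telescope ..
  also have "\<dots> \<le> c * ((real t + 1) * (L / 2 * a)) + c / (2 * s) * ((real t + 1) * b) + (\<Sum>k\<le>t. w k * R k)"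
  proof -
    have "L / 2 * (\<Sum>k\<le>t. A k) \<le> (real t + 1) * (L / 2 * a)" "(\<Sum>k\<le>t. B k) \<le> (real t + 1) * b"
      using sum_bounded_above[of "{..t}" A a] sum_bounded_above[of "{..t}" B b] A(2) B(2) \<open>L \<ge> 0\<close>
      by (simp_all add: add.commute mult_left_mono mult.left_commute)
    moreover have "0 \<le> (real t + 1) * ((\<mu> * (real t + 2) + 2 * L) / 4) * A (Suc t)" "0 \<le> (real t + 1) * B (Suc t)"
      using A(1) B(1) \<open>L \<ge> 0\<close> \<open>\<mu> \<ge> 0\<close> by simp_all
    ultimately have
      "L / 2 * (\<Sum>k\<le>t. A k) - (real t + 1) * ((\<mu> * (real t + 2) + 2 * L) / 4) * A (Suc t) \<le> (real t + 1) * (L / 2 * a)"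
      "(\<Sum>k\<le>t. B k) - (real t + 1) * B (Suc t) \<le> (real t + 1) * b"
      by linarith+
    then show ?thesis
      using \<open>c > 0\<close> \<open>s > 0\<close> by (intro add_mono mult_left_mono order_refl) auto
  qed
  also have "\<dots> = (c * (real t + 1)) * (L / 2 * a) + (c * (real t + 1)) / (2 * s) * b + (\<Sum>k\<le>t. w k * R k)"
    by (simp add: ac_simps)
  also have "c * (real t + 1) = 2 / (real t + 2)"
    by (simp add: c_def divide_simps)
  also have "2 / (real t + 2) * (L / 2 * a) + 2 / (real t + 2) / (2 * s) * b = b / (s * (real t + 2)) + L * a / (real t + 2)"
    using \<open>s > 0\<close> by (simp add: divide_simps) (simp add: algebra_simps)
  finally show ?thesis .
qed

lemma sum_averaging_weights_harmonic_le:
  fixes C \<mu> :: real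
  assumes "C \<ge> 0" "\<mu> > 0"
  shows "(\<Sum>k\<le>t. 2 * real (Suc k) / ((real t + 1) * (real t + 2)) * (C / (\<mu> * (real k + 2))))
    \<le> 2 * C / (\<mu> * (real t + 2))"
proof -
  have "(\<Sum>k\<le>t. 2 * real (Suc k) / ((real t + 1) * (real t + 2)) * (C / (\<mu> * (real k + 2))))
      \<le> (\<Sum>k\<le>t. 2 / ((real t + 1) * (real t + 2)) * (C / \<mu>))"
  proof (intro sum_mono)
    fix k
    have "real (Suc k) * (C / (\<mu> * (real k + 2))) = (real k + 1) / (real k + 2) * (C / \<mu>)"
      by (simp add: field_simps)
    also have "\<dots> \<le> 1 * (C / \<mu>)"
      using assms by (intro mult_right_mono) auto
    finally have "2 / ((real t + 1) * (real t + 2)) * (real (Suc k) * (C / (\<mu> * (real k + 2))))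
        \<le> 2 / ((real t + 1) * (real t + 2)) * (C / \<mu>)"
      by (intro mult_left_mono) simp_all
    then show "2 * real (Suc k) / ((real t + 1) * (real t + 2)) * (C / (\<mu> * (real k + 2)))
        \<le> 2 / ((real t + 1) * (real t + 2)) * (C / \<mu>)"
      by (simp only: times_divide_eq_left mult.assoc)
  qed
  also have "\<dots> = 2 * C / (\<mu> * (real t + 2))"
    using \<open>\<mu> > 0\<close> by (simp add: divide_simps)
  finally show ?thesis .
qed

section \<open>Integrating out an independent variable\<close>

lemma integrable_bounded_nonneg:
  fixes g h :: "'a \<Rightarrow> real"
  assumes "integrable M h" "g \<in> borel_measurable M" "\<And>x. 0 \<le> g x" "\<And>x. g x \<le> h x"
  shows "integrable M g" "0 \<le> (\<integral>x. g x \<partial>M)" "(\<integral>x. g x \<partial>M) \<le> (\<integral>x. h x \<partial>M)"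
proof -
  show "integrable M g"
    using assms order_trans[OF assms(3,4)] by (intro Bochner_Integration.integrable_bound[OF assms(1,2)]) auto
  then show "0 \<le> (\<integral>x. g x \<partial>M)" "(\<integral>x. g x \<partial>M) \<le> (\<integral>x. h x \<partial>M)"
    using assms by (auto intro!: integral_nonneg_AE integral_mono)
qed

text \<open>Integrating out a coordinate that is independent of \<open>U\<close>: a substitute for conditioning
  on \<open>U\<close>. Independence is expressed through the joint law, since \<open>indep_var\<close> needs both
  variables to have the same type.\<close>
lemma (in prob_space) nn_integral_product_joint_distr:
  assumes joint: "distr M (K \<Otimes>\<^sub>M E) (\<lambda>\<omega>. (U \<omega>, V \<omega>)) = distr M K U \<Otimes>\<^sub>M E"
    and U: "U \<in> measurable M K" and V: "V \<in> measurable M E" and "prob_space E"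
    and f: "f \<in> borel_measurable (K \<Otimes>\<^sub>M E)"
  shows "(\<integral>\<^sup>+\<omega>. f (U \<omega>, V \<omega>) \<partial>M) = (\<integral>\<^sup>+\<omega>. (\<integral>\<^sup>+e. f (U \<omega>, e) \<partial>E) \<partial>M)"
proof -
  interpret E: prob_space E by fact
  have f': "f \<in> borel_measurable (distr M K U \<Otimes>\<^sub>M E)"
    using f measurable_cong_sets[OF sets_pair_measure_cong[OF sets_distr refl] refl] by blast
  have "(\<integral>\<^sup>+\<omega>. f (U \<omega>, V \<omega>) \<partial>M) = (\<integral>\<^sup>+p. f p \<partial>distr M (K \<Otimes>\<^sub>M E) (\<lambda>\<omega>. (U \<omega>, V \<omega>)))"
    using U V f by (simp add: nn_integral_distr)
  also have "\<dots> = (\<integral>\<^sup>+u. (\<integral>\<^sup>+e. f (u, e) \<partial>E) \<partial>distr M K U)"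
    unfolding joint by (rule E.nn_integral_fst[OF f', symmetric])
  also have "\<dots> = (\<integral>\<^sup>+\<omega>. (\<integral>\<^sup>+e. f (U \<omega>, e) \<partial>E) \<partial>M)"
    using U f by (simp add: nn_integral_distr E.borel_measurable_nn_integral)
  finally show ?thesis .
qed

lemma (in prob_space) integral_product_joint_distr:
  fixes f :: "_ \<Rightarrow> real"
  assumes joint: "distr M (K \<Otimes>\<^sub>M E) (\<lambda>\<omega>. (U \<omega>, V \<omega>)) = distr M K U \<Otimes>\<^sub>M E"
    and U: "U \<in> measurable M K" and V: "V \<in> measurable M E" and "prob_space E"
    and f: "f \<in> borel_measurable (K \<Otimes>\<^sub>M E)" and int: "integrable M (\<lambda>\<omega>. f (U \<omega>, V \<omega>))"
  shows "(\<integral>\<omega>. f (U \<omega>, V \<omega>) \<partial>M) = (\<integral>\<omega>. (\<integral>e. f (U \<omega>, e) \<partial>E) \<partial>M)"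
proof -
  interpret E: prob_space E by fact
  interpret KE: pair_prob_space "distr M K U" E
    using prob_space_distr[OF U] E.prob_space_axioms by (simp add: pair_prob_space_def pair_sigma_finite_def
        prob_space_imp_sigma_finite)
  have UV: "(\<lambda>\<omega>. (U \<omega>, V \<omega>)) \<in> measurable M (K \<Otimes>\<^sub>M E)" using U V by simp
  have "integrable (distr M K U \<Otimes>\<^sub>M E) f"
    using int f UV by (simp add: joint[symmetric] integrable_distr_eq)
  have "(\<integral>\<omega>. f (U \<omega>, V \<omega>) \<partial>M) = (\<integral>p. f p \<partial>distr M (K \<Otimes>\<^sub>M E) (\<lambda>\<omega>. (U \<omega>, V \<omega>)))"
    using UV f by (simp add: integral_distr)
  also have "\<dots> = (\<integral>u. (\<integral>e. f (u, e) \<partial>E) \<partial>distr M K U)"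
    unfolding joint by (rule KE.integral_fst'[symmetric]) fact
  also have "\<dots> = (\<integral>\<omega>. (\<integral>e. f (U \<omega>, e) \<partial>E) \<partial>M)"
    using U f by (simp add: integral_distr E.borel_measurable_lebesgue_integral)
  finally show ?thesis .
qed

section \<open>The SPDHG iterates\<close>

lemma spdhg_cong_prefix:
  assumes "\<And>i. i < k \<Longrightarrow> w i = w' i"
  shows "spdhg l G F X Y s beta y0 x0 w k = spdhg l G F X Y s beta y0 x0 w' k"
  using assms by (induction k) (auto simp: Let_def split: prod.split)

lemma spdhg_singleton_step_sizes_irrelevant:
  "spdhg l G F {c} Y s beta y0 x0 w k = spdhg l G F {c} Y s beta' y0 x0 w k"
proof -
  have "closest_point {c} z = c" for z
    using closest_point_in_set[of "{c}" z] by simp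
  then show ?thesis by (induction k) (auto simp: Let_def split: prod.split)
qed

locale spdhg_run =
  fixes l :: "real^'d \<Rightarrow> real" and G :: "real^'d \<Rightarrow> 'e \<Rightarrow> real^'d" and F :: "real^'d^'l"
    and X :: "(real^'d) set" and Y :: "(real^'l) set" and s :: real and beta :: "nat \<Rightarrow> real"
    and y0 :: "real^'l" and x0 :: "real^'d"
  assumes X: "X \<noteq> {}" "convex X" "compact X" and Y: "Y \<noteq> {}" "convex Y" "compact Y"
    and s_pos: "s > 0" and x0: "x0 \<in> X" and y0: "y0 \<in> Y"
begin

declare spdhg.simps(2)[simp del]

abbreviation x_iter :: "(nat \<Rightarrow> 'e) \<Rightarrow> nat \<Rightarrow> real^'d" where
  "x_iter w k \<equiv> snd (spdhg l G F X Y s beta y0 x0 w k)"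

abbreviation y_iter :: "(nat \<Rightarrow> 'e) \<Rightarrow> nat \<Rightarrow> real^'l" where
  "y_iter w k \<equiv> fst (spdhg l G F X Y s beta y0 x0 w k)"

lemma closed_X: "closed X" and closed_Y: "closed Y"
  using X(3) Y(3) by (simp_all add: compact_imp_closed)

lemma y_iter_Suc: "y_iter w (Suc k) = closest_point Y (y_iter w k + s *\<^sub>R (F *v x_iter w k))"
  using arg_max_proximal_eq_closest_point[OF Y(1,2) closed_Y s_pos]
  by (simp add: spdhg.simps(2) Psad_def Let_def split: prod.split)

lemma x_iter_Suc:
  "x_iter w (Suc k) = closest_point X (x_iter w k - beta (Suc k) *\<^sub>R (G (x_iter w k) (w k) + transpose F *v y_iter w (Suc k)))"
  by (simp add: spdhg.simps(2) Let_def split: prod.split)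

lemma x_iter_in_X: "x_iter w k \<in> X"
  by (cases k) (simp_all add: x0 x_iter_Suc closest_point_in_set[OF closed_X X(1)])

lemma y_iter_in_Y: "y_iter w k \<in> Y"
  by (cases k) (simp_all add: y0 y_iter_Suc closest_point_in_set[OF closed_Y Y(1)])

definition noise :: "(real^'d \<Rightarrow> real^'d) \<Rightarrow> (nat \<Rightarrow> 'e) \<Rightarrow> nat \<Rightarrow> real^'d" where
  "noise gl w k = G (x_iter w k) (w k) - gl (x_iter w k)"

lemma averages_in_sets:
  assumes "(\<Sum>k\<le>t. alpha (Suc k)) = 1" "\<And>k. 0 \<le> alpha (Suc k)"
  shows "xbar l G F X Y s beta y0 x0 alpha w t \<in> X" "ybar l G F X Y s beta y0 x0 alpha w t \<in> Y"
  unfolding xbar_def ybar_def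
  using convex_sum[OF finite_atMost X(2) assms, of "\<lambda>k. x_iter w (Suc k)"]
    convex_sum[OF finite_atMost Y(2) assms, of "\<lambda>k. y_iter w (Suc k)"]
  by (simp_all add: x_iter_in_X y_iter_in_Y)

lemma duality_gap_nonneg:
  assumes saddle: "\<And>y x. y \<in> Y \<Longrightarrow> x \<in> X \<Longrightarrow>
      Psad l F y xstar \<le> Psad l F ystar xstar \<and> Psad l F ystar xstar \<le> Psad l F ystar x"
    and "(\<Sum>k\<le>t. alpha (Suc k)) = 1" "\<And>k. 0 \<le> alpha (Suc k)"
  shows "0 \<le> Psad l F ystar (xbar l G F X Y s beta y0 x0 alpha w t)
            - Psad l F (ybar l G F X Y s beta y0 x0 alpha w t) xstar"
proof -
  have "xbar l G F X Y s beta y0 x0 alpha w t \<in> X" "ybar l G F X Y s beta y0 x0 alpha w t \<in> Y"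
    using averages_in_sets assms(2,3) by blast+
  then show ?thesis using saddle by fastforce
qed

lemma duality_gap_le_nonneg_L:
  fixes gl :: "real^'d \<Rightarrow> real^'d"
  assumes l_convex: "convex_on X l"
    and strong: "\<And>x y. x \<in> X \<Longrightarrow> y \<in> X \<Longrightarrow> l y - l x - (y - x) \<bullet> gl x \<ge> \<mu> / 2 * (norm (y - x))\<^sup>2"
    and smooth: "\<And>x y. x \<in> X \<Longrightarrow> y \<in> X \<Longrightarrow> l y \<le> l x + gl x \<bullet> (y - x) + L / 2 * (norm (y - x))\<^sup>2"
    and "\<mu> > 0" "L \<ge> 0"
    and lam: "lam \<ge> 0" "\<And>d. (norm (F *v d))\<^sup>2 \<le> lam * (norm d)\<^sup>2"
    and ystar: "ystar \<in> Y" and xstar: "xstar \<in> X"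
    and beta_def: "beta = (\<lambda>j::nat. 2 / (\<mu> * (real j + 1) + 2 * L))"
    and alpha_def: "alpha = (\<lambda>j::nat. 2 * real j / ((real t + 1) * (real t + 2)))"
  shows "Psad l F ystar (xbar l G F X Y s beta y0 x0 alpha w t) - Psad l F (ybar l G F X Y s beta y0 x0 alpha w t) xstar
    \<le> (diameter Y)\<^sup>2 / (s * (real t + 2)) + L * (diameter X)\<^sup>2 / (real t + 2)
      + (\<Sum>k\<le>t. alpha (Suc k) * ((2 * lam * (diameter Y)\<^sup>2 + 2 * (norm (noise gl w k))\<^sup>2) / (\<mu> * (real k + 2))
          + noise gl w k \<bullet> (xstar - x_iter w k)))"
proof -
  define \<Phi> where "\<Phi> k = Psad l F ystar (x_iter w (Suc k)) - Psad l F (y_iter w (Suc k)) xstar" for k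
  have weights: "(\<Sum>k\<le>t. alpha (Suc k)) = 1" "\<And>k. 0 \<le> alpha (Suc k)"
    using sum_averaging_weights[of t] by (simp_all add: alpha_def)
  have "Psad l F ystar (xbar l G F X Y s beta y0 x0 alpha w t) - Psad l F (ybar l G F X Y s beta y0 x0 alpha w t) xstar
      \<le> (\<Sum>k\<le>t. alpha (Suc k) * \<Phi> k)"
    unfolding xbar_def ybar_def \<Phi>_def
    by (rule Psad_gap_convex_combination[OF l_convex finite_atMost weights]) (simp add: x_iter_in_X)
  also have "\<dots> \<le> (diameter Y)\<^sup>2 / (s * (real t + 2)) + L * (diameter X)\<^sup>2 / (real t + 2)
      + (\<Sum>k\<le>t. alpha (Suc k) * ((2 * lam * (diameter Y)\<^sup>2 + 2 * (norm (noise gl w k))\<^sup>2) / (\<mu> * (real k + 2))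
          + noise gl w k \<bullet> (xstar - x_iter w k)))"
    unfolding alpha_def
  proof (rule weighted_telescoping_bound[OF \<open>L \<ge> 0\<close> _ s_pos])
    show "(norm (xstar - x_iter w k))\<^sup>2 \<le> (diameter X)\<^sup>2" "(norm (ystar - y_iter w k))\<^sup>2 \<le> (diameter Y)\<^sup>2" for k
      using diameter_bounded_bound[OF compact_imp_bounded[OF X(3)] xstar x_iter_in_X]
        diameter_bounded_bound[OF compact_imp_bounded[OF Y(3)] ystar y_iter_in_Y]
      by (simp_all add: dist_norm power_mono)
    show "\<Phi> k \<le> (\<mu> * real k + 2 * L) / 4 * (norm (xstar - x_iter w k))\<^sup>2
        - (\<mu> * (real k + 2) + 2 * L) / 4 * (norm (xstar - x_iter w (Suc k)))\<^sup>2
        + 1 / (2 * s) * ((norm (ystar - y_iter w k))\<^sup>2 - (norm (ystar - y_iter w (Suc k)))\<^sup>2)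
        + ((2 * lam * (diameter Y)\<^sup>2 + 2 * (norm (noise gl w k))\<^sup>2) / (\<mu> * (real k + 2))
          + noise gl w k \<bullet> (xstar - x_iter w k))" for k
    proof -
      have "beta (Suc k) = 2 / (\<mu> * (real k + 2) + 2 * L)"
        by (simp add: beta_def add.commute)
      from spdhg_step_inequality[OF X(2) closed_X Y(2) closed_Y compact_imp_bounded[OF Y(3)] strong smooth
          s_pos \<open>\<mu> > 0\<close> of_nat_0_le_iff[of k] \<open>L \<ge> 0\<close> lam xstar ystar x_iter_in_X y_iter_Suc[of w] x_iter_Suc[of w] this]
      show ?thesis unfolding \<Phi>_def noise_def by linarith
    qed
  qed (use \<open>\<mu> > 0\<close> in auto)
  finally show ?thesis .
qed

text \<open>A negative Lipschitz constant forces \<open>X\<close> to be a point; then the step sizes are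
  irrelevant and we may pass to \<open>L = 0\<close>.\<close>
lemma duality_gap_le:
  fixes gl :: "real^'d \<Rightarrow> real^'d"
  assumes l_convex: "convex_on X l"
    and l_deriv: "\<And>x. x \<in> X \<Longrightarrow> (l has_derivative (\<lambda>h. gl x \<bullet> h)) (at x within X)"
    and gl_lip: "\<And>x1 x2. x1 \<in> X \<Longrightarrow> x2 \<in> X \<Longrightarrow> norm (gl x1 - gl x2) \<le> L * norm (x1 - x2)"
    and strong: "\<And>x y. x \<in> X \<Longrightarrow> y \<in> X \<Longrightarrow> l y - l x - (y - x) \<bullet> gl x \<ge> \<mu> / 2 * (norm (y - x))\<^sup>2"
    and "\<mu> > 0"
    and lam: "lam \<ge> 0" "\<And>d. (norm (F *v d))\<^sup>2 \<le> lam * (norm d)\<^sup>2"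
    and ystar: "ystar \<in> Y" and xstar: "xstar \<in> X"
    and beta_def: "beta = (\<lambda>j::nat. 2 / (\<mu> * (real j + 1) + 2 * L))"
    and alpha_def: "alpha = (\<lambda>j::nat. 2 * real j / ((real t + 1) * (real t + 2)))"
  shows "Psad l F ystar (xbar l G F X Y s beta y0 x0 alpha w t) - Psad l F (ybar l G F X Y s beta y0 x0 alpha w t) xstar
    \<le> (diameter Y)\<^sup>2 / (s * (real t + 2)) + L * (diameter X)\<^sup>2 / (real t + 2)
      + (\<Sum>k\<le>t. alpha (Suc k) * ((2 * lam * (diameter Y)\<^sup>2 + 2 * (norm (noise gl w k))\<^sup>2) / (\<mu> * (real k + 2))
          + noise gl w k \<bullet> (xstar - x_iter w k)))"
proof (cases "L \<ge> 0")
  case True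
  show ?thesis
    using lipschitz_gradient_upper_bound[OF X(2) _ _ l_deriv gl_lip]
    by (intro duality_gap_le_nonneg_L[OF l_convex strong _ \<open>\<mu> > 0\<close> True lam ystar xstar beta_def alpha_def])
next
  case False
  have "a = b" if "a \<in> X" "b \<in> X" for a b
  proof -
    have "0 \<le> L * norm (a - b)" using gl_lip[OF that] norm_ge_zero order_trans by blast
    then show ?thesis using False by (simp add: zero_le_mult_iff)
  qed
  then have X_eq: "X = {xstar}" using xstar by blast
  define beta0 where "beta0 = (\<lambda>j::nat. 2 / (\<mu> * (real j + 1) + 2 * 0))"
  interpret run0: spdhg_run l G F X Y s beta0 y0 x0
    using spdhg_run_axioms unfolding spdhg_run_def .
  have same: "spdhg l G F X Y s beta0 y0 x0 w k = spdhg l G F X Y s beta y0 x0 w k" for w k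
    unfolding X_eq by (rule spdhg_singleton_step_sizes_irrelevant)
  have "l y \<le> l x + gl x \<bullet> (y - x) + 0 / 2 * (norm (y - x))\<^sup>2" if "x \<in> X" "y \<in> X" for x y
    using that X_eq by simp
  from run0.duality_gap_le_nonneg_L[OF l_convex strong this \<open>\<mu> > 0\<close> order_refl lam ystar xstar beta0_def alpha_def]
  show ?thesis
    unfolding xbar_def ybar_def run0.noise_def noise_def same by (simp add: X_eq)
qed

end

section \<open>Random samples\<close>

locale spdhg_sampling = spdhg_run l G F X Y s beta y0 x0
  for l :: "real^'d \<Rightarrow> real" and G :: "real^'d \<Rightarrow> 'e \<Rightarrow> real^'d" and F :: "real^'d^'l"
    and X Y s beta y0 x0 +
  fixes M :: "'e measure" and N :: "'w measure" and \<xi> :: "nat \<Rightarrow> 'w \<Rightarrow> 'e"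
  assumes G_meas: "(\<lambda>p. G (fst p) (snd p)) \<in> borel_measurable (borel \<Otimes>\<^sub>M M)"
    and N_prob: "prob_space N"
    and xi_meas: "\<And>k. \<xi> k \<in> measurable N M"
    and xi_distr: "\<And>k. distr N M (\<xi> k) = M"
    and xi_indep: "prob_space.indep_vars N (\<lambda>_. M) \<xi> UNIV"
begin

lemma M_prob: "prob_space M"
  using prob_space.prob_space_distr[OF N_prob xi_meas[of 0]] by (simp add: xi_distr)

abbreviation samples :: "'w \<Rightarrow> nat \<Rightarrow> 'e" where
  "samples \<omega> \<equiv> \<lambda>i. \<xi> i \<omega>"

lemma measurable_iterates_prefix:
  "j \<le> k \<Longrightarrow> (\<lambda>r. x_iter r j) \<in> borel_measurable (PiM {..<k} (\<lambda>_. M))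
      \<and> (\<lambda>r. y_iter r j) \<in> borel_measurable (PiM {..<k} (\<lambda>_. M))"
proof (induction j)
  case (Suc j)
  have [measurable]: "closest_point X \<in> borel_measurable borel" "closest_point Y \<in> borel_measurable borel"
    using X(1,2) Y(1,2) closed_X closed_Y
    by (auto intro!: borel_measurable_continuous_onI continuous_on_closest_point)
  have [measurable]: "(\<lambda>x. F *v x) \<in> borel_measurable borel" "(\<lambda>x. transpose F *v x) \<in> borel_measurable borel"
    by (rule borel_measurable_continuous_onI[OF matrix_vector_mult_linear_continuous_on])+
  from Suc have "j < k" by simp
  with Suc.IH have [measurable]: "(\<lambda>r. x_iter r j) \<in> borel_measurable (PiM {..<k} (\<lambda>_. M))"
      "(\<lambda>r. y_iter r j) \<in> borel_measurable (PiM {..<k} (\<lambda>_. M))"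
    by auto
  have "(\<lambda>r. r j) \<in> measurable (PiM {..<k} (\<lambda>_. M)) M"
    using \<open>j < k\<close> by (intro measurable_component_singleton) auto
  from measurable_compose[OF measurable_Pair[OF _ this] G_meas]
  have [measurable]: "(\<lambda>r. G (x_iter r j) (r j)) \<in> borel_measurable (PiM {..<k} (\<lambda>_. M))"
    by simp
  show ?case unfolding x_iter_Suc y_iter_Suc by (intro conjI; measurable)
qed simp

lemma measurable_iterates:
  "(\<lambda>\<omega>. x_iter (samples \<omega>) k) \<in> borel_measurable N" "(\<lambda>\<omega>. y_iter (samples \<omega>) k) \<in> borel_measurable N"
proof -
  have prefix: "(\<lambda>\<omega>. restrict (samples \<omega>) {..<k}) \<in> measurable N (PiM {..<k} (\<lambda>_. M))"
    using xi_meas by (intro measurable_restrict) auto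
  have "spdhg l G F X Y s beta y0 x0 (samples \<omega>) k = spdhg l G F X Y s beta y0 x0 (restrict (samples \<omega>) {..<k}) k" for \<omega>
    by (rule spdhg_cong_prefix) simp
  then show "(\<lambda>\<omega>. x_iter (samples \<omega>) k) \<in> borel_measurable N" "(\<lambda>\<omega>. y_iter (samples \<omega>) k) \<in> borel_measurable N"
    using measurable_compose[OF prefix conjunct1[OF measurable_iterates_prefix[OF order_refl]]]
      measurable_compose[OF prefix conjunct2[OF measurable_iterates_prefix[OF order_refl]]]
    by simp_all
qed

lemma joint_distr_iterate_sample:
  "distr N (borel \<Otimes>\<^sub>M M) (\<lambda>\<omega>. (x_iter (samples \<omega>) k, \<xi> k \<omega>))
     = distr N borel (\<lambda>\<omega>. x_iter (samples \<omega>) k) \<Otimes>\<^sub>M M"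
proof -
  interpret N: prob_space N by (rule N_prob)
  define P where "P = PiM {..<k} (\<lambda>_. M)"
  define Q where "Q = PiM {k} (\<lambda>_. M)"
  define past where "past = (\<lambda>\<omega>. restrict (samples \<omega>) {..<k})"
  define now where "now = (\<lambda>\<omega>. restrict (samples \<omega>) {k})"
  define h where "h = (\<lambda>r. x_iter r k)"
  have past[measurable]: "past \<in> measurable N P" and now[measurable]: "now \<in> measurable N Q"
    using xi_meas by (auto simp: P_def Q_def past_def now_def intro!: measurable_restrict)
  have h[measurable]: "h \<in> borel_measurable P" and at_k[measurable]: "(\<lambda>b. b k) \<in> measurable Q M"
    using measurable_iterates_prefix[OF order_refl] by (auto simp: h_def P_def Q_def)
  have h_past: "h (past \<omega>) = x_iter (samples \<omega>) k" for \<omega>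
    unfolding h_def past_def by (rule arg_cong[where f=snd], rule spdhg_cong_prefix) simp
  have now_k: "now \<omega> k = \<xi> k \<omega>" for \<omega> by (simp add: now_def)
  have "N.indep_var P past Q now"
    unfolding P_def Q_def past_def now_def by (rule N.indep_var_restrict[OF xi_indep]) auto
  then have indep: "distr N P past \<Otimes>\<^sub>M distr N Q now = distr N (P \<Otimes>\<^sub>M Q) (\<lambda>\<omega>. (past \<omega>, now \<omega>))"
    by (simp add: N.indep_var_distribution_eq)
  have "distr N (borel \<Otimes>\<^sub>M M) (\<lambda>\<omega>. (x_iter (samples \<omega>) k, \<xi> k \<omega>))
      = distr (distr N (P \<Otimes>\<^sub>M Q) (\<lambda>\<omega>. (past \<omega>, now \<omega>))) (borel \<Otimes>\<^sub>M M) (\<lambda>(r, b). (h r, b k))"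
    using distr_distr[of "\<lambda>(r, b). (h r, b k)" "P \<Otimes>\<^sub>M Q" "borel \<Otimes>\<^sub>M M" "\<lambda>\<omega>. (past \<omega>, now \<omega>)" N]
      measurable_Pair[OF past now] by (simp add: comp_def h_past now_k)
  also have "\<dots> = distr (distr N P past) borel h \<Otimes>\<^sub>M distr (distr N Q now) M (\<lambda>b. b k)"
    unfolding indep[symmetric]
    by (rule pair_measure_distr[symmetric])
      (auto intro!: prob_space_imp_sigma_finite N.prob_space_distr simp: distr_distr comp_def now_k xi_distr M_prob)
  also have "\<dots> = distr N borel (\<lambda>\<omega>. x_iter (samples \<omega>) k) \<Otimes>\<^sub>M M"
    by (simp add: distr_distr comp_def h_past now_k xi_distr)
  finally show ?thesis .
qed

lemma noise_second_moment:
  fixes gl :: "real^'d \<Rightarrow> real^'d"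
  assumes gl_cont: "continuous_on X gl"
    and G_var: "\<And>x. x \<in> X \<Longrightarrow> (\<integral>\<^sup>+e. ennreal ((norm (G x e - gl x))\<^sup>2) \<partial>M) \<le> ennreal (\<sigma>\<^sup>2)"
  shows "integrable N (\<lambda>\<omega>. (norm (noise gl (samples \<omega>) k))\<^sup>2)"
    and "(\<integral>\<omega>. (norm (noise gl (samples \<omega>) k))\<^sup>2 \<partial>N) \<le> \<sigma>\<^sup>2"
proof -
  interpret N: prob_space N by (rule N_prob)
  define gl' where "gl' x = indicator X x *\<^sub>R gl x" for x
  \<comment> \<open>\<open>gl\<close> is only continuous on \<open>X\<close>, which contains all iterates\<close>
  have [measurable]: "gl' \<in> borel_measurable borel"
    unfolding gl'_def by (rule borel_measurable_continuous_on_indicator[OF borel_closed[OF closed_X] gl_cont])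
  have [measurable]: "(\<lambda>p. G (fst p) (snd p)) \<in> borel_measurable (borel \<Otimes>\<^sub>M M)" by (rule G_meas)
  define q where "q p = (norm (G (fst p) (snd p) - gl' (fst p)))\<^sup>2" for p
  have q[measurable]: "q \<in> borel_measurable (borel \<Otimes>\<^sub>M M)" unfolding q_def by measurable
  have noise_q: "(norm (noise gl (samples \<omega>) k))\<^sup>2 = q (x_iter (samples \<omega>) k, \<xi> k \<omega>)" for \<omega>
    using x_iter_in_X by (simp add: noise_def q_def gl'_def)
  have "(\<integral>\<^sup>+\<omega>. ennreal ((norm (noise gl (samples \<omega>) k))\<^sup>2) \<partial>N)
      = (\<integral>\<^sup>+\<omega>. (\<integral>\<^sup>+e. ennreal (q (x_iter (samples \<omega>) k, e)) \<partial>M) \<partial>N)"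
    unfolding noise_q
    by (rule N.nn_integral_product_joint_distr[OF joint_distr_iterate_sample measurable_iterates(1) xi_meas M_prob])
      measurable
  also have "\<dots> \<le> (\<integral>\<^sup>+\<omega>. ennreal (\<sigma>\<^sup>2) \<partial>N)"
    using G_var[OF x_iter_in_X] x_iter_in_X by (intro nn_integral_mono) (simp add: q_def gl'_def)
  finally have bound: "(\<integral>\<^sup>+\<omega>. ennreal ((norm (noise gl (samples \<omega>) k))\<^sup>2) \<partial>N) \<le> ennreal (\<sigma>\<^sup>2)"
    by (simp add: N.emeasure_space_1)
  have "(\<lambda>\<omega>. (norm (noise gl (samples \<omega>) k))\<^sup>2) \<in> borel_measurable N"
    unfolding noise_q by (rule measurable_compose[OF measurable_Pair[OF measurable_iterates(1) xi_meas] q])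
  then show "integrable N (\<lambda>\<omega>. (norm (noise gl (samples \<omega>) k))\<^sup>2)"
    using bound by (intro integrableI_nonneg) (auto simp: top_unique intro: le_less_trans)
  show "(\<integral>\<omega>. (norm (noise gl (samples \<omega>) k))\<^sup>2 \<partial>N) \<le> \<sigma>\<^sup>2"
    by (rule integral_real_bounded[OF _ bound]) simp
qed

lemma noise_inner_mean_zero:
  fixes gl :: "real^'d \<Rightarrow> real^'d"
  assumes gl_cont: "continuous_on X gl"
    and G_unbiased: "\<And>x. x \<in> X \<Longrightarrow> integrable M (G x) \<and> (\<integral>e. G x e \<partial>M) = gl x"
    and G_var: "\<And>x. x \<in> X \<Longrightarrow> (\<integral>\<^sup>+e. ennreal ((norm (G x e - gl x))\<^sup>2) \<partial>M) \<le> ennreal (\<sigma>\<^sup>2)"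
    and xstar: "xstar \<in> X"
  shows "integrable N (\<lambda>\<omega>. noise gl (samples \<omega>) k \<bullet> (xstar - x_iter (samples \<omega>) k))"
    and "(\<integral>\<omega>. noise gl (samples \<omega>) k \<bullet> (xstar - x_iter (samples \<omega>) k) \<partial>N) = 0"
proof -
  interpret N: prob_space N by (rule N_prob)
  interpret M: prob_space M by (rule M_prob)
  define gl' where "gl' x = indicator X x *\<^sub>R gl x" for x
  have [measurable]: "gl' \<in> borel_measurable borel"
    unfolding gl'_def by (rule borel_measurable_continuous_on_indicator[OF borel_closed[OF closed_X] gl_cont])
  have [measurable]: "(\<lambda>p. G (fst p) (snd p)) \<in> borel_measurable (borel \<Otimes>\<^sub>M M)" by (rule G_meas)
  define q where "q p = (G (fst p) (snd p) - gl' (fst p)) \<bullet> (xstar - fst p)" for p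
  have q[measurable]: "q \<in> borel_measurable (borel \<Otimes>\<^sub>M M)" unfolding q_def by measurable
  have noise_q: "noise gl (samples \<omega>) k \<bullet> (xstar - x_iter (samples \<omega>) k) = q (x_iter (samples \<omega>) k, \<xi> k \<omega>)" for \<omega>
    using x_iter_in_X by (simp add: noise_def q_def gl'_def)
  have q_bound: "\<bar>q (x_iter (samples \<omega>) k, \<xi> k \<omega>)\<bar> \<le> diameter X * (1 + (norm (noise gl (samples \<omega>) k))\<^sup>2)" for \<omega>
    unfolding noise_q[symmetric]
    by (rule abs_inner_le_diameter[OF compact_imp_bounded[OF X(3)] xstar x_iter_in_X])
  have "0 \<le> diameter X"
    using diameter_ge_0[OF compact_imp_bounded[OF X(3)]] .
  have "integrable N (\<lambda>\<omega>. diameter X * (1 + (norm (noise gl (samples \<omega>) k))\<^sup>2))"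
    using noise_second_moment(1)[OF gl_cont G_var, of k]
    by (intro integrable_mult_right Bochner_Integration.integrable_add N.integrable_const)
  from Bochner_Integration.integrable_bound[OF this
      measurable_compose[OF measurable_Pair[OF measurable_iterates(1) xi_meas] q]]
  have int: "integrable N (\<lambda>\<omega>. q (x_iter (samples \<omega>) k, \<xi> k \<omega>))"
    using q_bound \<open>0 \<le> diameter X\<close> by auto
  then show "integrable N (\<lambda>\<omega>. noise gl (samples \<omega>) k \<bullet> (xstar - x_iter (samples \<omega>) k))"
    unfolding noise_q .
  have "(\<integral>e. q (x, e) \<partial>M) = 0" if "x \<in> X" for x
  proof -
    have "(\<integral>e. q (x, e) \<partial>M) = (\<integral>e. G x e - gl x \<partial>M) \<bullet> (xstar - x)"
      using that G_unbiased[OF that] by (simp add: q_def gl'_def)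
    also have "(\<integral>e. G x e - gl x \<partial>M) = 0"
      using G_unbiased[OF that] by (simp add: M.prob_space)
    finally show ?thesis by simp
  qed
  then have "(\<integral>\<omega>. q (x_iter (samples \<omega>) k, \<xi> k \<omega>) \<partial>N) = (\<integral>\<omega>. 0 \<partial>N)"
    unfolding N.integral_product_joint_distr[OF joint_distr_iterate_sample measurable_iterates(1) xi_meas M_prob q int]
    by (intro Bochner_Integration.integral_cong) (simp_all add: x_iter_in_X)
  then show "(\<integral>\<omega>. noise gl (samples \<omega>) k \<bullet> (xstar - x_iter (samples \<omega>) k) \<partial>N) = 0"
    unfolding noise_q by simp
qed

lemma expected_residual_sum_le:
  fixes gl :: "real^'d \<Rightarrow> real^'d"
  assumes gl_cont: "continuous_on X gl"
    and G_unbiased: "\<And>x. x \<in> X \<Longrightarrow> integrable M (G x) \<and> (\<integral>e. G x e \<partial>M) = gl x"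
    and G_var: "\<And>x. x \<in> X \<Longrightarrow> (\<integral>\<^sup>+e. ennreal ((norm (G x e - gl x))\<^sup>2) \<partial>M) \<le> ennreal (\<sigma>\<^sup>2)"
    and xstar: "xstar \<in> X" and "\<mu> > 0" "lam \<ge> 0"
    and alpha_def: "alpha = (\<lambda>j::nat. 2 * real j / ((real t + 1) * (real t + 2)))"
  defines "R \<equiv> \<lambda>k \<omega>. (2 * lam * (diameter Y)\<^sup>2 + 2 * (norm (noise gl (samples \<omega>) k))\<^sup>2) / (\<mu> * (real k + 2))
      + noise gl (samples \<omega>) k \<bullet> (xstar - x_iter (samples \<omega>) k)"
  shows "integrable N (\<lambda>\<omega>. \<Sum>k\<le>t. alpha (Suc k) * R k \<omega>)"
    and "(\<integral>\<omega>. (\<Sum>k\<le>t. alpha (Suc k) * R k \<omega>) \<partial>N)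
      \<le> (4 * lam * (diameter Y)\<^sup>2 + 4 * \<sigma>\<^sup>2) / (\<mu> * (real t + 2))"
proof -
  interpret N: prob_space N by (rule N_prob)
  define C where "C = 2 * lam * (diameter Y)\<^sup>2 + 2 * \<sigma>\<^sup>2"
  note sq = noise_second_moment[OF gl_cont G_var] and inner = noise_inner_mean_zero[OF gl_cont G_unbiased G_var xstar]
  have R_int: "integrable N (R k)" for k
    unfolding R_def using sq(1) inner(1)
    by (intro Bochner_Integration.integrable_add integrable_divide_zero N.integrable_const integrable_mult_right)
  have "integral\<^sup>L N (R k) = (2 * lam * (diameter Y)\<^sup>2 + 2 * (\<integral>\<omega>. (norm (noise gl (samples \<omega>) k))\<^sup>2 \<partial>N)) / (\<mu> * (real k + 2))" for k
    unfolding R_def using sq(1) inner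
    by (simp add: N.prob_space)
  also have "\<dots> k \<le> C / (\<mu> * (real k + 2))" for k
    using sq(2)[of k] \<open>\<mu> > 0\<close> unfolding C_def by (intro divide_right_mono) auto
  finally have R_le: "integral\<^sup>L N (R k) \<le> C / (\<mu> * (real k + 2))" for k .
  show "integrable N (\<lambda>\<omega>. \<Sum>k\<le>t. alpha (Suc k) * R k \<omega>)"
    using R_int by (intro Bochner_Integration.integrable_sum integrable_mult_right)
  have "(\<integral>\<omega>. (\<Sum>k\<le>t. alpha (Suc k) * R k \<omega>) \<partial>N) = (\<Sum>k\<le>t. alpha (Suc k) * integral\<^sup>L N (R k))"
    using R_int by (simp add: Bochner_Integration.integral_sum)
  also have "\<dots> \<le> (\<Sum>k\<le>t. alpha (Suc k) * (C / (\<mu> * (real k + 2))))"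
    using R_le by (intro sum_mono mult_left_mono) (auto simp: alpha_def)
  also have "\<dots> \<le> 2 * C / (\<mu> * (real t + 2))"
    unfolding alpha_def using \<open>\<mu> > 0\<close> \<open>lam \<ge> 0\<close>
    by (intro sum_averaging_weights_harmonic_le) (auto simp: C_def)
  finally show "(\<integral>\<omega>. (\<Sum>k\<le>t. alpha (Suc k) * R k \<omega>) \<partial>N)
      \<le> (4 * lam * (diameter Y)\<^sup>2 + 4 * \<sigma>\<^sup>2) / (\<mu> * (real t + 2))"
    by (simp add: C_def mult.assoc)
qed

lemma measurable_duality_gap:
  assumes "continuous_on X l" and weights: "(\<Sum>k\<le>t. alpha (Suc k)) = 1" "\<And>k. 0 \<le> alpha (Suc k)"
  shows "(\<lambda>\<omega>. Psad l F ystar (xbar l G F X Y s beta y0 x0 alpha (samples \<omega>) t)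
      - Psad l F (ybar l G F X Y s beta y0 x0 alpha (samples \<omega>) t) xstar) \<in> borel_measurable N"
proof -
  define l' where "l' x = indicator X x *\<^sub>R l x" for x
  have [measurable]: "l' \<in> borel_measurable borel"
    unfolding l'_def by (rule borel_measurable_continuous_on_indicator[OF borel_closed[OF closed_X] assms(1)])
  have [measurable]: "(\<lambda>x. F *v x) \<in> borel_measurable borel"
    by (rule borel_measurable_continuous_onI[OF matrix_vector_mult_linear_continuous_on])
  note [measurable] = measurable_iterates
  have [measurable]: "(\<lambda>\<omega>. xbar l G F X Y s beta y0 x0 alpha (samples \<omega>) t) \<in> borel_measurable N"
    "(\<lambda>\<omega>. ybar l G F X Y s beta y0 x0 alpha (samples \<omega>) t) \<in> borel_measurable N"
    unfolding xbar_def ybar_def by measurable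
  have "Psad l F ystar (xbar l G F X Y s beta y0 x0 alpha (samples \<omega>) t)
      = l' (xbar l G F X Y s beta y0 x0 alpha (samples \<omega>) t) + ystar \<bullet> (F *v xbar l G F X Y s beta y0 x0 alpha (samples \<omega>) t)" for \<omega>
    using averages_in_sets(1)[OF weights] by (simp add: Psad_def l'_def)
  then show ?thesis by (simp add: Psad_def)
qed

end

theorem theorem5:
  fixes X :: "(real^'d) set" and Y :: "(real^'l) set" and F :: "real^'d^'l"
    and l :: "real^'d \<Rightarrow> real" and gl :: "real^'d \<Rightarrow> real^'d"
    and L \<mu> \<sigma> s :: real
    and M :: "'e measure" and G :: "real^'d \<Rightarrow> 'e \<Rightarrow> real^'d"
    and N :: "'w measure" and \<xi> :: "nat \<Rightarrow> 'w \<Rightarrow> 'e"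
    and x0 :: "real^'d" and y0 :: "real^'l" and ystar :: "real^'l" and xstar :: "real^'d"
    and t :: nat
  assumes X: "X \<noteq> {}" "convex X" "compact X"
    and Y: "Y \<noteq> {}" "convex Y" "compact Y"
    and l_convex: "convex_on X l"
    and l_deriv: "\<And>x. x \<in> X \<Longrightarrow> (l has_derivative (\<lambda>h. gl x \<bullet> h)) (at x within X)"
    and gl_cont: "continuous_on X gl"
    and gl_lip: "\<And>x1 x2. x1 \<in> X \<Longrightarrow> x2 \<in> X \<Longrightarrow> norm (gl x1 - gl x2) \<le> L * norm (x1 - x2)"
    and mu_pos: "\<mu> > 0"
    and strong: "\<And>x y. x \<in> X \<Longrightarrow> y \<in> X \<Longrightarrow>
                   l y - l x - (y - x) \<bullet> gl x \<ge> \<mu> / 2 * (norm (y - x))\<^sup>2"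
    and M_prob: "prob_space M"
    and G_meas: "(\<lambda>p. G (fst p) (snd p)) \<in> borel_measurable (borel \<Otimes>\<^sub>M M)"
    and G_unbiased: "\<And>x. x \<in> X \<Longrightarrow> integrable M (G x) \<and> (\<integral>e. G x e \<partial>M) = gl x"
    and G_var: "\<And>x. x \<in> X \<Longrightarrow> (\<integral>\<^sup>+e. ennreal ((norm (G x e - gl x))\<^sup>2) \<partial>M) \<le> ennreal (\<sigma>\<^sup>2)"
    and G_subgauss: "\<And>x. x \<in> X \<Longrightarrow>
          (\<integral>\<^sup>+e. ennreal (exp ((norm (G x e - gl x))\<^sup>2 / \<sigma>\<^sup>2)) \<partial>M) \<le> ennreal (exp 1)"
    and sigma_pos: "\<sigma> > 0"
    and N_prob: "prob_space N"
    and xi_meas: "\<And>k. \<xi> k \<in> measurable N M"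
    and xi_distr: "\<And>k. distr N M (\<xi> k) = M"
    and xi_indep: "prob_space.indep_vars N (\<lambda>_. M) \<xi> UNIV"
    and s_pos: "s > 0"
    and x0: "x0 \<in> X" and y0: "y0 \<in> Y"
    and saddle: "ystar \<in> Y" "xstar \<in> X"
        "\<And>y x. y \<in> Y \<Longrightarrow> x \<in> X \<Longrightarrow>
           Psad l F y xstar \<le> Psad l F ystar xstar \<and> Psad l F ystar xstar \<le> Psad l F ystar x"
  fixes beta alpha :: "nat \<Rightarrow> real"
  assumes beta_def: "beta = (\<lambda>j::nat. 2 / (\<mu> * (real j + 1) + 2 * L))"
    and alpha_def: "alpha = (\<lambda>j::nat. 2 * real j / ((real t + 1) * (real t + 2)))"
  defines "gap \<equiv> (\<lambda>w. Psad l F ystar (xbar l G F X Y s beta y0 x0 alpha (\<lambda>k. \<xi> k w) t)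
                   - Psad l F (ybar l G F X Y s beta y0 x0 alpha (\<lambda>k. \<xi> k w) t) xstar)"
  shows "integrable N gap \<and> 0 \<le> (\<integral>w. gap w \<partial>N) \<and>
         (\<integral>w. gap w \<partial>N) \<le> (diameter Y)\<^sup>2 / (s * (real t + 2)) + L * (diameter X)\<^sup>2 / (real t + 2)
           + (4 * lambda_max (transpose F ** F) * (diameter Y)\<^sup>2 + 4 * \<sigma>\<^sup>2) / (\<mu> * (real t + 2))"
  \<comment> \<open>\<open>G_subgauss\<close> is only needed for the high-probability form of the rate; \<open>M_prob\<close>
    follows from \<open>xi_distr\<close>.\<close>
proof -
  interpret spdhg_sampling l G F X Y s beta y0 x0 M N \<xi>
    using X Y s_pos x0 y0 G_meas N_prob xi_meas xi_distr xi_indep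
    by (simp add: spdhg_sampling_def spdhg_run_def spdhg_sampling_axioms_def)
  interpret N: prob_space N by (rule N_prob)
  define lam where "lam = lambda_max (transpose F ** F)"
  have lam: "lam \<ge> 0" "\<And>d. (norm (F *v d))\<^sup>2 \<le> lam * (norm d)\<^sup>2"
    unfolding lam_def by (rule lambda_max_Gram)+
  have weights: "(\<Sum>k\<le>t. alpha (Suc k)) = 1" "\<And>k. 0 \<le> alpha (Suc k)"
    using sum_averaging_weights[of t] by (simp_all add: alpha_def)
  define K where "K = (diameter Y)\<^sup>2 / (s * (real t + 2)) + L * (diameter X)\<^sup>2 / (real t + 2)"
  define R where "R k \<omega> = (2 * lam * (diameter Y)\<^sup>2 + 2 * (norm (noise gl (samples \<omega>) k))\<^sup>2) / (\<mu> * (real k + 2))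
      + noise gl (samples \<omega>) k \<bullet> (xstar - x_iter (samples \<omega>) k)" for k \<omega>
  note residual = expected_residual_sum_le[OF gl_cont G_unbiased G_var saddle(2) mu_pos lam(1) alpha_def]
  have nonneg: "0 \<le> gap w" for w
    unfolding gap_def by (rule duality_gap_nonneg[OF saddle(3) weights])
  have le: "gap w \<le> K + (\<Sum>k\<le>t. alpha (Suc k) * R k w)" for w
    unfolding gap_def K_def R_def
    by (rule duality_gap_le[OF l_convex l_deriv gl_lip strong mu_pos lam saddle(1,2) beta_def alpha_def])
  have int: "integrable N (\<lambda>w. K + (\<Sum>k\<le>t. alpha (Suc k) * R k w))"
    using residual(1) unfolding R_def by simp
  have meas: "gap \<in> borel_measurable N"
    unfolding gap_def using has_derivative_continuous_on[OF l_deriv] by (rule measurable_duality_gap[OF _ weights])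
  have "(\<integral>w. K + (\<Sum>k\<le>t. alpha (Suc k) * R k w) \<partial>N) = K + (\<integral>w. (\<Sum>k\<le>t. alpha (Suc k) * R k w) \<partial>N)"
    using residual(1) unfolding R_def by (simp add: N.prob_space)
  then show ?thesis
    using integrable_bounded_nonneg[OF int meas nonneg le] residual(2) unfolding K_def R_def lam_def by simp
qed

end
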